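(* Let $S=\{(x_1,x_2)\in\mathbb{R}^2:x_1\ge0,\ x_1^2-x_2^3\ge0\}$ and $G=\{X_1,X_1^2-X_2^3\}$. Then for every integer $k\ge1$, $\mathrm{TH}_k(G)=\overline{\Omega_k(G)}=\{(x_1,x_2)\in\mathbb{R}^2:x_1\ge0\}$ (for $k\ge2$ in the case of $\Omega_k$), whereas $\mathrm{conv}(S)=S\neq\{x_1\ge0\}$; hence neither hierarchy converges to $\overline{\mathrm{conv}(S)}$.
   Context: For a finite set $H=\{h_1,\dots,h_r\}\subseteq\mathbb{R}[X_1,X_2]$, $\mathcal{Q}_k(H)=\{\sum_{j=0}^r\sigma_jh_j:h_0=1,\ \sigma_j\text{ sums of squares},\ \deg(\sigma_jh_j)\le2k\}$. $\mathrm{TH}_k(G)=\{x:p(x)\ge0\ \forall p\in\mathcal{Q}_k(G)\text{ of degree}\le1\}$. For $y=(y_\alpha)_{\alpha\in\mathbb{N}^2,|\alpha|\le2k}$, $L_y(\sum q_\alpha X^\alpha)=\sum q_\alpha y_\alpha$, $M_k(y)=(y_{\alpha+\beta})_{|\alpha|,|\beta|\le k}$, and for $p=\sum_\beta p_\beta X^\beta$ with $d_p=\lceil\deg p/2\rceil$, $M_{k-d_p}(py)=(\sum_\beta p_\beta y_{\alpha+\gamma+\beta})_{|\alpha|,|\gamma|\le k-d_p}$. $\Omega_k(G)=\{x:\exists y,\ L_y(1)=1,\ L_y(X_i)=x_i,\ M_k(y)\succeq0,\ M_{k-1}(X_1y)\succeq0,\ M_{k-2}((X_1^2-X_2^3)y)\succeq0\}$.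 *)

theory Defs
  imports "HOL-Analysis.Analysis"
begin

text \<open>Real polynomials in two variables X1, X2, represented by their coefficient
  functions: p (a,b) is the coefficient of X1^a X2^b. A genuine polynomial is
  one with finite support.\<close>

type_synonym poly2 = "nat \<times> nat \<Rightarrow> real"

definition supp2 :: "poly2 \<Rightarrow> (nat \<times> nat) set" where
  "supp2 p = {\<alpha>. p \<alpha> \<noteq> 0}"

definition is_poly2 :: "poly2 \<Rightarrow> bool" where
  "is_poly2 p \<longleftrightarrow> finite (supp2 p)"

definition tdeg :: "nat \<times> nat \<Rightarrow> nat" where
  "tdeg \<alpha> = fst \<alpha> + snd \<alpha>"

text \<open>total degree (degree of the zero polynomial taken to be 0)\<close>
definition deg2 :: "poly2 \<Rightarrow> nat" where
  "deg2 p = (if supp2 p = {} then 0 else Max (tdeg ` supp2 p))"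

definition deg_le :: "poly2 \<Rightarrow> nat \<Rightarrow> bool" where
  "deg_le p d \<longleftrightarrow> (\<forall>\<alpha>. p \<alpha> \<noteq> 0 \<longrightarrow> tdeg \<alpha> \<le> d)"

definition const2 :: "real \<Rightarrow> poly2" where
  "const2 c = (\<lambda>\<alpha>. if \<alpha> = (0,0) then c else 0)"

definition pmul :: "poly2 \<Rightarrow> poly2 \<Rightarrow> poly2" where
  "pmul p q = (\<lambda>\<gamma>. \<Sum>i\<le>fst \<gamma>. \<Sum>j\<le>snd \<gamma>. p (i,j) * q (fst \<gamma> - i, snd \<gamma> - j))"

definition eval2 :: "poly2 \<Rightarrow> real \<times> real \<Rightarrow> real" where
  "eval2 p x = (\<Sum>\<alpha>\<in>supp2 p. p \<alpha> * fst x ^ fst \<alpha> * snd x ^ snd \<alpha>)"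

definition is_sos :: "poly2 \<Rightarrow> bool" where
  "is_sos \<sigma> \<longleftrightarrow> (\<exists>qs. (\<forall>q\<in>set qs. is_poly2 q) \<and> \<sigma> = (\<lambda>\<alpha>. \<Sum>q\<leftarrow>qs. pmul q q \<alpha>))"

definition Qmod :: "nat \<Rightarrow> poly2 list \<Rightarrow> poly2 set" where
  "Qmod k H = {(\<lambda>\<alpha>. \<Sum>j<length (const2 1 # H). pmul (\<sigma>s ! j) ((const2 1 # H) ! j) \<alpha>) | \<sigma>s.
      length \<sigma>s = length H + 1 \<and>
      (\<forall>j<length H + 1. is_sos (\<sigma>s ! j) \<and> deg_le (pmul (\<sigma>s ! j) ((const2 1 # H) ! j)) (2 * k))}"

definition TH :: "nat \<Rightarrow> poly2 list \<Rightarrow> (real \<times> real) set" where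
  "TH k H = {x. \<forall>p\<in>Qmod k H. deg_le p 1 \<longrightarrow> eval2 p x \<ge> 0}"

definition Ly :: "(nat \<times> nat \<Rightarrow> real) \<Rightarrow> poly2 \<Rightarrow> real" where
  "Ly y p = (\<Sum>\<alpha>\<in>supp2 p. p \<alpha> * y \<alpha>)"

definition psd_idx :: "nat \<Rightarrow> (nat \<times> nat \<Rightarrow> nat \<times> nat \<Rightarrow> real) \<Rightarrow> bool" where
  "psd_idx m A \<longleftrightarrow> (\<forall>v :: nat \<times> nat \<Rightarrow> real.
      (\<Sum>\<alpha>\<in>{\<alpha>. tdeg \<alpha> \<le> m}. \<Sum>\<gamma>\<in>{\<gamma>. tdeg \<gamma> \<le> m}. v \<alpha> * v \<gamma> * A \<alpha> \<gamma>) \<ge> 0)"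

definition moment_mat :: "(nat \<times> nat \<Rightarrow> real) \<Rightarrow> nat \<times> nat \<Rightarrow> nat \<times> nat \<Rightarrow> real" where
  "moment_mat y = (\<lambda>\<alpha> \<gamma>. y (\<alpha> + \<gamma>))"

definition loc_mat :: "poly2 \<Rightarrow> (nat \<times> nat \<Rightarrow> real) \<Rightarrow> nat \<times> nat \<Rightarrow> nat \<times> nat \<Rightarrow> real" where
  "loc_mat p y = (\<lambda>\<alpha> \<gamma>. \<Sum>\<beta>\<in>supp2 p. p \<beta> * y (\<alpha> + \<gamma> + \<beta>))"

definition dhalf :: "poly2 \<Rightarrow> nat" where
  "dhalf p = nat \<lceil>real (deg2 p) / 2\<rceil>"

definition Omega :: "nat \<Rightarrow> poly2 list \<Rightarrow> (real \<times> real) set" where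
  "Omega k G = {x. \<exists>y :: nat \<times> nat \<Rightarrow> real.
      Ly y (const2 1) = 1 \<and> y (1,0) = fst x \<and> y (0,1) = snd x \<and>
      psd_idx k (moment_mat y) \<and>
      (\<forall>p\<in>set G. psd_idx (k - dhalf p) (loc_mat p y))}"

definition X1 :: poly2 where
  "X1 = (\<lambda>\<alpha>. if \<alpha> = (1,0) then 1 else 0)"

definition cusp :: poly2 where
  "cusp = (\<lambda>\<alpha>. if \<alpha> = (2,0) then 1 else if \<alpha> = (0,3) then -1 else 0)"

definition Gcusp :: "poly2 list" where
  "Gcusp = [X1, cusp]"

definition Scusp :: "(real \<times> real) set" where
  "Scusp = {x. fst x \<ge> 0 \<and> fst x ^ 2 - snd x ^ 3 \<ge> 0}"

end

(*
  TH_k: a linear form in Q_k(G) is a certificate sigma_0 + sigma_1 X1 + sigma_2 (X1^2 - X2^3)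
  with sums of squares sigma_j. On the axis X1 = 0 the last term is sigma_2(0,t) (-t^3), which
  grows cubically as t -> -oo unless sigma_2 vanishes there; so the form has no X2-term and is
  a + b X1 with a, b >= 0. Conversely X1 itself lies in Q_k(G).

  Omega_k, k = d + 2: every point with x1 >= 0 is the barycentre of a probability measure with
  atoms at (0, -mu (i+1)) for i <= d, at (0, mu tau) outside S, and one more atom inside S fixing
  the mean. The cusp localizing form of order d only tests polynomials of degree <= d along the
  axis; Lagrange interpolation bounds their value at tau by their values at the d + 1 nodes,
  where the cusp is positive, which for small tau outweighs the atom outside S.

  Coefficient functions are identified with polynomials in X1 over polynomials in X2, where
  pmul becomes ordinary multiplication.
*)

theory Submission
  imports Defs "HOL-Real_Asymp.Real_Asymp"
begin

section \<open>Coefficient functions as polynomials over polynomials\<close>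

definition bipoly :: "poly2 \<Rightarrow> real poly poly" where
  "bipoly p = (\<Sum>\<alpha>\<in>supp2 p. monom (monom (p \<alpha>) (snd \<alpha>)) (fst \<alpha>))"

definition coeffs2 :: "real poly poly \<Rightarrow> poly2" where
  "coeffs2 R = (\<lambda>(i, j). coeff (coeff R i) j)"

lemma eval2_bipoly: "eval2 p x = poly (poly (bipoly p) [:fst x:]) (snd x)"
  by (simp add: eval2_def bipoly_def poly_sum poly_monom poly_mult mult_ac)

lemma coeffs2_bipoly:
  assumes "is_poly2 p" shows "coeffs2 (bipoly p) = p"
proof (intro ext, clarify)
  fix i j
  have "coeffs2 (bipoly p) (i, j) = (\<Sum>\<alpha>\<in>supp2 p. if \<alpha> = (i, j) then p \<alpha> else 0)"
    unfolding coeffs2_def bipoly_def coeff_sum by (auto simp: coeff_monom intro!: sum.cong)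
  also have "\<dots> = p (i, j)"
    using assms by (simp add: is_poly2_def supp2_def)
  finally show "coeffs2 (bipoly p) (i, j) = p (i, j)" .
qed

lemma is_poly2_coeffs2: "is_poly2 (coeffs2 R)"
proof -
  have "supp2 (coeffs2 R) \<subseteq> (SIGMA i:{..degree R}. {..degree (coeff R i)})"
    by (force simp: supp2_def coeffs2_def intro: le_degree)
  then show ?thesis
    unfolding is_poly2_def by (rule finite_subset) auto
qed

lemma bipoly_coeffs2: "bipoly (coeffs2 R) = R"
proof (intro poly_eqI)
  fix i j
  have "coeffs2 (bipoly (coeffs2 R)) (i, j) = coeffs2 R (i, j)"
    by (simp add: coeffs2_bipoly[OF is_poly2_coeffs2])
  then show "coeff (coeff (bipoly (coeffs2 R)) i) j = coeff (coeff R i) j"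
    by (simp add: coeffs2_def)
qed

lemma pmul_eq_coeffs2:
  assumes "is_poly2 p" "is_poly2 q"
  shows "pmul p q = coeffs2 (bipoly p * bipoly q)"
proof
  fix \<gamma> :: "nat \<times> nat"
  show "pmul p q \<gamma> = coeffs2 (bipoly p * bipoly q) \<gamma>"
    using coeffs2_bipoly[OF assms(1)] coeffs2_bipoly[OF assms(2)]
    by (cases \<gamma>) (simp add: pmul_def coeffs2_def coeff_mult coeff_sum fun_eq_iff)
qed

lemma sum_eq_coeffs2:
  assumes "\<forall>i\<in>I. is_poly2 (f i)"
  shows "(\<lambda>\<alpha>. \<Sum>i\<in>I. f i \<alpha>) = coeffs2 (\<Sum>i\<in>I. bipoly (f i))"
proof (intro ext, clarify)
  fix i j
  show "(\<Sum>k\<in>I. f k (i, j)) = coeffs2 (\<Sum>k\<in>I. bipoly (f k)) (i, j)"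
    using assms coeffs2_bipoly by (simp add: coeffs2_def coeff_sum fun_eq_iff)
qed

lemma pmul_poly2:
  assumes "is_poly2 p" "is_poly2 q"
  shows "is_poly2 (pmul p q)" "eval2 (pmul p q) x = eval2 p x * eval2 q x"
  using assms by (simp_all only: pmul_eq_coeffs2 is_poly2_coeffs2 eval2_bipoly bipoly_coeffs2 poly_mult)

lemma sum_poly2:
  assumes "\<forall>i\<in>I. is_poly2 (f i)"
  shows "is_poly2 (\<lambda>\<alpha>. \<Sum>i\<in>I. f i \<alpha>)" "eval2 (\<lambda>\<alpha>. \<Sum>i\<in>I. f i \<alpha>) x = (\<Sum>i\<in>I. eval2 (f i) x)"
  using assms by (simp_all only: sum_eq_coeffs2 is_poly2_coeffs2 eval2_bipoly bipoly_coeffs2 poly_sum)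

lemma eval2_on_axis: "eval2 p (0, t) = poly (coeff (bipoly p) 0) t"
  by (simp add: eval2_bipoly poly_0_coeff_0)

lemma sos_nonneg:
  assumes "is_sos \<sigma>" shows "is_poly2 \<sigma>" "0 \<le> eval2 \<sigma> x"
proof -
  obtain qs where qs: "\<forall>q\<in>set qs. is_poly2 q" and "\<sigma> = (\<lambda>\<alpha>. \<Sum>q\<leftarrow>qs. pmul q q \<alpha>)"
    using assms unfolding is_sos_def by blast
  then have \<sigma>: "\<sigma> = (\<lambda>\<alpha>. \<Sum>i<length qs. pmul (qs ! i) (qs ! i) \<alpha>)"
    by (simp add: sum_list_sum_nth atLeast0LessThan)
  have "\<forall>i\<in>{..<length qs}. is_poly2 (pmul (qs ! i) (qs ! i))"
    using qs by (simp add: pmul_poly2)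
  from sum_poly2[OF this] show "is_poly2 \<sigma>" "0 \<le> eval2 \<sigma> x"
    using qs by (simp_all add: \<sigma> pmul_poly2 sum_nonneg)
qed

lemma is_poly2_const2: "is_poly2 (const2 c)"
  by (simp add: is_poly2_def supp2_def const2_def)

lemma pmul_const2: "pmul (const2 c) q = (\<lambda>\<alpha>. c * q \<alpha>)"
proof
  fix \<gamma> :: "nat \<times> nat"
  have "pmul (const2 c) q \<gamma>
      = (\<Sum>i\<le>fst \<gamma>. \<Sum>j\<le>snd \<gamma>. if i = 0 then (if j = 0 then c * q (fst \<gamma> - i, snd \<gamma> - j) else 0) else 0)"
    unfolding pmul_def const2_def by (intro sum.cong) auto
  also have "\<dots> = (\<Sum>i\<le>fst \<gamma>. if i = 0 then (\<Sum>j\<le>snd \<gamma>. if j = 0 then c * q (fst \<gamma> - i, snd \<gamma> - j) else 0) else 0)"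
    by (intro sum.cong) auto
  also have "\<dots> = c * q \<gamma>"
    by (simp add: sum.delta)
  finally show "pmul (const2 c) q \<gamma> = c * q \<gamma>" .
qed

lemma Qmod_eval:
  assumes "p \<in> Qmod k H" "\<forall>h\<in>set H. is_poly2 h"
  obtains \<sigma>s where "\<forall>j<length H + 1. is_sos (\<sigma>s ! j)"
    "\<And>x. eval2 p x = (\<Sum>j<length H + 1. eval2 (\<sigma>s ! j) x * eval2 ((const2 1 # H) ! j) x)"
proof -
  obtain \<sigma>s where p: "p = (\<lambda>\<alpha>. \<Sum>j<length H + 1. pmul (\<sigma>s ! j) ((const2 1 # H) ! j) \<alpha>)"
    and \<sigma>s: "length \<sigma>s = length H + 1" "\<forall>j<length H + 1. is_sos (\<sigma>s ! j)"
    using assms(1) unfolding Qmod_def by auto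
  have gens: "\<forall>j<length H + 1. is_poly2 ((const2 1 # H) ! j)"
    using assms(2) is_poly2_const2 by (auto simp: nth_Cons split: nat.split)
  then have terms: "\<forall>j\<in>{..<length H + 1}. is_poly2 (pmul (\<sigma>s ! j) ((const2 1 # H) ! j))"
    using \<sigma>s(2) sos_nonneg(1) pmul_poly2(1) by blast
  show ?thesis
    using that[OF \<sigma>s(2)] sum_poly2[OF terms] gens \<sigma>s(2) by (simp add: p sos_nonneg pmul_poly2)
qed

section \<open>The hierarchy TH\<close>

lemma supp2_X1: "supp2 X1 = {(1, 0)}"
  by (auto simp: supp2_def X1_def)

lemma supp2_cusp: "supp2 cusp = {(2, 0), (0, 3)}"
  by (auto simp: supp2_def cusp_def)

lemma eval2_const2: "eval2 (const2 c) x = c"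
proof -
  have "supp2 (const2 c) = (if c = 0 then {} else {(0, 0)})"
    by (auto simp: supp2_def const2_def)
  then show ?thesis
    by (simp add: eval2_def const2_def)
qed

lemma eval2_X1: "eval2 X1 x = fst x"
  unfolding eval2_def supp2_X1 by (simp add: X1_def)

lemma eval2_cusp: "eval2 cusp x = fst x ^ 2 - snd x ^ 3"
  unfolding eval2_def supp2_cusp by (simp add: cusp_def)

lemma affine_nonneg_on_ray:
  fixes a b :: real
  assumes "\<And>s. 0 \<le> s \<Longrightarrow> 0 \<le> a + b * s"
  shows "0 \<le> b"
proof (rule ccontr)
  assume "\<not> 0 \<le> b"
  then have "eventually (\<lambda>s. a + b * s < 0) at_top"
    by real_asymp
  moreover have "eventually (\<lambda>s::real. 0 \<le> s) at_top"
    by (rule eventually_ge_at_top)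
  ultimately have "eventually (\<lambda>s. a + b * s < 0 \<and> 0 \<le> s) at_top"
    by (rule eventually_conj)
  then obtain s where "a + b * s < 0" "0 \<le> s"
    using eventually_happens'[OF trivial_limit_at_top_linorder] by blast
  then show False
    using assms by fastforce
qed

lemma nonneg_poly_eventually_ge_at_bot:
  fixes P :: "real poly"
  assumes "\<And>t. 0 \<le> poly P t" "P \<noteq> 0"
  obtains d where "0 < d" "eventually (\<lambda>t. d \<le> poly P t) at_bot"
proof (cases "degree P = 0")
  case True
  then obtain c where "P = [:c:]"
    by (metis degree_eq_zeroE)
  with assms have "0 < c" "\<And>t. poly P t = c"
    by fastforce+
  with that show ?thesis
    by simp
next
  case False
  have "filterlim (poly P) at_infinity at_bot"
    using filterlim_poly_at_infinity[of P] False filterlim_mono at_bot_le_at_infinity by blast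
  then have "eventually (\<lambda>t. 1 \<le> norm (poly P t)) at_bot"
    by (simp add: filterlim_at_infinity[OF order_refl])
  with that[of 1] assms(1) show ?thesis
    by (simp add: eventually_mono)
qed

lemma eventually_cubic_gt_affine_at_bot:
  fixes a c d :: real
  assumes "0 < d"
  shows "eventually (\<lambda>t. a + c * t < d * - (t ^ 3)) at_bot"
proof -
  have "eventually (\<lambda>s. a - c * s < d * s ^ 3) at_top"
    using assms by real_asymp
  then show ?thesis
    unfolding at_bot_mirror eventually_filtermap by simp
qed

lemma affine_dominates_cubic_certificate:
  fixes P :: "real poly"
  assumes "\<And>t. 0 \<le> poly P t" "\<And>t. poly P t * - (t ^ 3) \<le> a + c * t"
  shows "c = 0"
proof -
  have "P = 0"
  proof (rule ccontr)
    assume "P \<noteq> 0"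
    then obtain d where "0 < d" and "eventually (\<lambda>t. d \<le> poly P t) at_bot"
      using nonneg_poly_eventually_ge_at_bot assms(1) by blast
    moreover have "eventually (\<lambda>t. a + c * t < d * - (t ^ 3)) at_bot"
      using \<open>0 < d\<close> by (rule eventually_cubic_gt_affine_at_bot)
    moreover have "eventually (\<lambda>t::real. t \<le> 0) at_bot"
      by (rule eventually_le_at_bot)
    ultimately have "eventually (\<lambda>t. d \<le> poly P t \<and> a + c * t < d * - (t ^ 3) \<and> t \<le> 0) at_bot"
      by (simp add: eventually_conj_iff)
    then obtain t where t: "d \<le> poly P t" "a + c * t < d * - (t ^ 3)" "t \<le> 0"
      using eventually_happens'[OF trivial_limit_at_bot_linorder] by blast
    have "0 \<le> - (t ^ 3)"
      using t(3) zero_le_power[of "- t" 3] by simp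
    then have "d * - (t ^ 3) \<le> poly P t * - (t ^ 3)"
      by (rule mult_right_mono[OF t(1)])
    with t(2) assms(2)[of t] show False
      by linarith
  qed
  then have nonneg: "0 \<le> a + c * t" for t
    using assms(2)[of t] by simp
  have "0 \<le> c"
    by (rule affine_nonneg_on_ray) (rule nonneg)
  moreover have "0 \<le> - c"
  proof (rule affine_nonneg_on_ray)
    show "0 \<le> a + - c * s" for s
      using nonneg[of "- s"] by simp
  qed
  ultimately show ?thesis
    by simp
qed

lemma Qmod_Gcusp_eval:
  assumes "p \<in> Qmod k Gcusp"
  obtains \<sigma>\<^sub>0 \<sigma>\<^sub>1 \<sigma>\<^sub>2 where "is_sos \<sigma>\<^sub>0" "is_sos \<sigma>\<^sub>1" "is_sos \<sigma>\<^sub>2"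
    "\<And>x. eval2 p x = eval2 \<sigma>\<^sub>0 x + eval2 \<sigma>\<^sub>1 x * fst x + eval2 \<sigma>\<^sub>2 x * (fst x ^ 2 - snd x ^ 3)"
proof -
  have "\<forall>h\<in>set Gcusp. is_poly2 h"
    by (simp add: Gcusp_def is_poly2_def supp2_X1 supp2_cusp)
  from Qmod_eval[OF assms this] obtain \<sigma>s where
    sos: "\<forall>j<length Gcusp + 1. is_sos (\<sigma>s ! j)" and
    eval: "\<And>x. eval2 p x = (\<Sum>j<length Gcusp + 1. eval2 (\<sigma>s ! j) x * eval2 ((const2 1 # Gcusp) ! j) x)"
    by blast
  show ?thesis
  proof (rule that)
    show "is_sos (\<sigma>s ! 0)" "is_sos (\<sigma>s ! 1)" "is_sos (\<sigma>s ! 2)"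
      using sos by (simp_all add: Gcusp_def)
    show "eval2 p x = eval2 (\<sigma>s ! 0) x + eval2 (\<sigma>s ! 1) x * fst x + eval2 (\<sigma>s ! 2) x * (fst x ^ 2 - snd x ^ 3)" for x
      unfolding eval by (simp add: Gcusp_def numeral_3_eq_3 numeral_2_eq_2 eval2_const2 eval2_X1 eval2_cusp)
  qed
qed

lemma eval2_deg_le_1:
  assumes "deg_le p 1"
  shows "eval2 p x = p (0, 0) + p (1, 0) * fst x + p (0, 1) * snd x"
proof -
  have "\<alpha> \<in> {(0, 0), (1, 0), (0, 1)}" if "tdeg \<alpha> \<le> 1" for \<alpha>
    using that by (cases \<alpha>) (auto simp: tdeg_def le_Suc_eq add_is_1)
  then have "supp2 p \<subseteq> {(0, 0), (1, 0), (0, 1)}"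
    using assms by (auto simp: deg_le_def supp2_def)
  then show ?thesis
    unfolding eval2_def by (subst sum.mono_neutral_left[where T = "{(0, 0), (1, 0), (0, 1)}"])
      (auto simp: supp2_def)
qed

lemma Qmod_Gcusp_linear_nonneg:
  assumes "p \<in> Qmod k Gcusp" "deg_le p 1" "0 \<le> fst x"
  shows "0 \<le> eval2 p x"
proof -
  obtain \<sigma>\<^sub>0 \<sigma>\<^sub>1 \<sigma>\<^sub>2 where \<sigma>: "is_sos \<sigma>\<^sub>0" "is_sos \<sigma>\<^sub>1" "is_sos \<sigma>\<^sub>2"
    and p: "\<And>x. eval2 p x = eval2 \<sigma>\<^sub>0 x + eval2 \<sigma>\<^sub>1 x * fst x + eval2 \<sigma>\<^sub>2 x * (fst x ^ 2 - snd x ^ 3)"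
    using Qmod_Gcusp_eval[OF assms(1)] by blast
  define a b c where "a = p (0, 0)" and "b = p (1, 0)" and "c = p (0, 1)"
  have certificate: "a + b * s + c * t
      = eval2 \<sigma>\<^sub>0 (s, t) + eval2 \<sigma>\<^sub>1 (s, t) * s + eval2 \<sigma>\<^sub>2 (s, t) * (s ^ 2 - t ^ 3)" for s t
    using p[of "(s, t)"] eval2_deg_le_1[OF assms(2), of "(s, t)"] by (simp add: a_def b_def c_def)
  have ray: "0 \<le> a + b * s" if "0 \<le> s" for s
  proof -
    have "0 \<le> eval2 \<sigma>\<^sub>0 (s, 0) + eval2 \<sigma>\<^sub>1 (s, 0) * s + eval2 \<sigma>\<^sub>2 (s, 0) * (s ^ 2 - 0 ^ 3)"
      using that by (intro add_nonneg_nonneg mult_nonneg_nonneg sos_nonneg \<sigma>) simp_all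
    then show ?thesis
      using certificate[of s 0] by simp
  qed
  then have "0 \<le> a" "0 \<le> b"
    using affine_nonneg_on_ray[OF ray] ray[of 0] by simp_all
  moreover have "c = 0"
  proof (rule affine_dominates_cubic_certificate)
    fix t
    have axis: "poly (coeff (bipoly \<sigma>\<^sub>2) 0) t = eval2 \<sigma>\<^sub>2 (0, t)"
      by (simp only: eval2_on_axis)
    show "0 \<le> poly (coeff (bipoly \<sigma>\<^sub>2) 0) t"
      unfolding axis by (rule sos_nonneg(2)[OF \<sigma>(3)])
    show "poly (coeff (bipoly \<sigma>\<^sub>2) 0) t * - (t ^ 3) \<le> a + c * t"
      unfolding axis using certificate[of 0 t] sos_nonneg(2)[OF \<sigma>(1), of "(0, t)"] by simp
  qed
  ultimately show ?thesis
    using assms(3) eval2_deg_le_1[OF assms(2), of x] unfolding a_def b_def c_def by simp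
qed

lemma X1_in_Qmod:
  assumes "1 \<le> k"
  shows "X1 \<in> Qmod k Gcusp"
proof -
  have sos_0: "is_sos (\<lambda>_. 0)"
    unfolding is_sos_def by (intro exI[of _ "[]"]) simp
  have sos_1: "is_sos (const2 1)"
    unfolding is_sos_def
    by (intro exI[of _ "[const2 1]"]) (simp add: is_poly2_const2 pmul_const2)
  have "deg_le X1 (2 * k)"
    using assms by (auto simp: deg_le_def X1_def tdeg_def)
  moreover have "pmul (\<lambda>_. 0) q = (\<lambda>_. 0)" for q
    by (simp add: pmul_def)
  ultimately show ?thesis
    unfolding Qmod_def using sos_0 sos_1
    by (intro CollectI exI[of _ "[\<lambda>_. 0, const2 1, \<lambda>_. 0]"])
      (auto simp: Gcusp_def numeral_3_eq_3 numeral_2_eq_2 pmul_const2 deg_le_def less_Suc_eq)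
qed

lemma TH_Gcusp:
  assumes "1 \<le> k"
  shows "TH k Gcusp = {x. 0 \<le> fst x}"
proof
  have "deg_le X1 1"
    by (auto simp: deg_le_def X1_def tdeg_def)
  then show "TH k Gcusp \<subseteq> {x. 0 \<le> fst x}"
    using X1_in_Qmod[OF assms] by (auto simp: TH_def eval2_X1 dest: bspec)
  show "{x. 0 \<le> fst x} \<subseteq> TH k Gcusp"
    unfolding TH_def using Qmod_Gcusp_linear_nonneg by blast
qed

section \<open>Convexity of the cusp region\<close>

lemma power_mean_2_le_3:
  fixes u v A B :: real
  assumes "0 \<le> u" "0 \<le> v" "u + v = 1" "0 \<le> A" "0 \<le> B"
  shows "(u * A ^ 2 + v * B ^ 2) ^ 3 \<le> (u * A ^ 3 + v * B ^ 3) ^ 2"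
proof -
  have v: "v = 1 - u"
    using assms(3) by simp
  have "(u * A ^ 3 + v * B ^ 3) ^ 2 - (u * A ^ 2 + v * B ^ 2) ^ 3
      = u * v * (A - B) ^ 2 * (u * A ^ 3 * (A + 2 * B) + v * B ^ 3 * (B + 2 * A))"
    unfolding v by (simp add: algebra_simps power2_eq_square power3_eq_cube)
  moreover have "0 \<le> u * v * (A - B) ^ 2 * (u * A ^ 3 * (A + 2 * B) + v * B ^ 3 * (B + 2 * A))"
    using assms by (intro mult_nonneg_nonneg add_nonneg_nonneg) auto
  ultimately show ?thesis
    by linarith
qed

lemma le_root3_square:
  fixes s t :: real
  assumes "0 \<le> s" "t ^ 3 \<le> s ^ 2"
  shows "t \<le> root 3 s ^ 2"
proof -
  have "(root 3 s ^ 2) ^ 3 = (root 3 s ^ 3) ^ 2"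
    by (simp flip: power_mult add: mult.commute)
  then have "t ^ 3 \<le> (root 3 s ^ 2) ^ 3"
    using assms by simp
  then show ?thesis
    using power_le_imp_le_base[of t 2 "root 3 s ^ 2"] by simp
qed

(* With x1 = A^3, membership in Scusp reads x2 \<le> A^2; convexity is then M_2 \<le> M_3. *)
lemma convex_Scusp: "convex Scusp"
proof (rule convexI)
  fix x y :: "real \<times> real" and u v :: real
  assume "x \<in> Scusp" "y \<in> Scusp" and uv: "0 \<le> u" "0 \<le> v" "u + v = 1"
  then have x: "0 \<le> fst x" "snd x ^ 3 \<le> fst x ^ 2" and y: "0 \<le> fst y" "snd y ^ 3 \<le> fst y ^ 2"
    by (auto simp: Scusp_def)
  define A B where "A = root 3 (fst x)" and "B = root 3 (fst y)"
  have AB: "0 \<le> A" "A ^ 3 = fst x" "0 \<le> B" "B ^ 3 = fst y"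
    using x(1) y(1) by (auto simp: A_def B_def)
  have "u * snd x + v * snd y \<le> u * A ^ 2 + v * B ^ 2"
    using le_root3_square[OF x] le_root3_square[OF y] uv unfolding A_def B_def
    by (intro add_mono mult_left_mono) auto
  then have "(u * snd x + v * snd y) ^ 3 \<le> (u * A ^ 2 + v * B ^ 2) ^ 3"
    by (rule power_mono_odd[rotated]) simp
  also have "\<dots> \<le> (u * fst x + v * fst y) ^ 2"
    using power_mean_2_le_3[OF uv AB(1,3)] AB by simp
  finally show "u *\<^sub>R x + v *\<^sub>R y \<in> Scusp"
    using uv x(1) y(1) by (simp add: Scusp_def)
qed

section \<open>The moment hierarchy Omega\<close>

lemma finite_tdeg_le: "finite {\<alpha> :: nat \<times> nat. tdeg \<alpha> \<le> m}"
  by (rule finite_subset[of _ "{..m} \<times> {..m}"]) (auto simp: tdeg_def)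

lemma psd_idx_diag_nonneg:
  assumes "psd_idx m A" "tdeg \<alpha> \<le> m"
  shows "0 \<le> A \<alpha> \<alpha>"
proof -
  define v :: "nat \<times> nat \<Rightarrow> real" where "v \<beta> = (if \<beta> = \<alpha> then 1 else 0)" for \<beta>
  have "0 \<le> (\<Sum>\<beta>\<in>{\<beta>. tdeg \<beta> \<le> m}. \<Sum>\<gamma>\<in>{\<gamma>. tdeg \<gamma> \<le> m}. v \<beta> * v \<gamma> * A \<beta> \<gamma>)"
    using assms(1) unfolding psd_idx_def by blast
  also have "\<dots> = (\<Sum>\<beta>\<in>{\<beta>. tdeg \<beta> \<le> m}. if \<beta> = \<alpha> then (\<Sum>\<gamma>\<in>{\<gamma>. tdeg \<gamma> \<le> m}. if \<gamma> = \<alpha> then A \<beta> \<gamma> else 0) else 0)"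
    by (intro sum.cong) (auto simp: v_def intro!: sum.cong)
  also have "\<dots> = A \<alpha> \<alpha>"
    using assms(2) by (simp add: finite_tdeg_le)
  finally show ?thesis .
qed

lemma dhalf_X1: "dhalf X1 = 1"
proof -
  have "\<lceil>(1::real) / 2\<rceil> = 1"
    by (simp add: ceiling_eq_iff)
  then show ?thesis
    by (simp add: dhalf_def deg2_def supp2_X1 tdeg_def)
qed

lemma dhalf_cusp: "dhalf cusp = 2"
proof -
  have "\<lceil>(3::real) / 2\<rceil> = 2"
    by (simp add: ceiling_eq_iff)
  then show ?thesis
    by (simp add: dhalf_def deg2_def supp2_cusp tdeg_def)
qed

lemma Omega_Gcusp_subset:
  assumes "1 \<le> k"
  shows "Omega k Gcusp \<subseteq> {x. 0 \<le> fst x}"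
proof
  fix x assume "x \<in> Omega k Gcusp"
  then obtain y where "y (1, 0) = fst x" and psd: "psd_idx (k - 1) (loc_mat X1 y)"
    by (auto simp: Omega_def Gcusp_def dhalf_X1)
  moreover have "loc_mat X1 y (0, 0) (0, 0) = y (1, 0)"
    unfolding loc_mat_def supp2_X1 by (simp add: X1_def)
  moreover have "0 \<le> loc_mat X1 y (0, 0) (0, 0)"
    using psd by (rule psd_idx_diag_nonneg) (simp add: tdeg_def)
  ultimately show "x \<in> {x. 0 \<le> fst x}"
    by simp
qed

definition xpow :: "real \<times> real \<Rightarrow> nat \<times> nat \<Rightarrow> real" where
  "xpow x \<alpha> = fst x ^ fst \<alpha> * snd x ^ snd \<alpha>"

definition atomic_moments :: "('i \<Rightarrow> real) \<Rightarrow> ('i \<Rightarrow> real \<times> real) \<Rightarrow> 'i set \<Rightarrow> nat \<times> nat \<Rightarrow> real" where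
  "atomic_moments w z I \<alpha> = (\<Sum>i\<in>I. w i * xpow (z i) \<alpha>)"

lemma xpow_add: "xpow x (\<alpha> + \<gamma>) = xpow x \<alpha> * xpow x \<gamma>"
  by (simp add: xpow_def power_add)

lemma moment_mat_eq_loc_mat: "moment_mat y = loc_mat (const2 1) y"
proof -
  have "supp2 (const2 1) = {(0, 0)}"
    by (auto simp: supp2_def const2_def)
  then show ?thesis
    by (simp add: moment_mat_def loc_mat_def const2_def flip: zero_prod_def)
qed

lemma loc_mat_atomic_moments:
  "loc_mat p (atomic_moments w z I) \<alpha> \<gamma> = (\<Sum>i\<in>I. w i * eval2 p (z i) * xpow (z i) \<alpha> * xpow (z i) \<gamma>)"
proof -
  have "loc_mat p (atomic_moments w z I) \<alpha> \<gamma>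
      = (\<Sum>\<beta>\<in>supp2 p. \<Sum>i\<in>I. p \<beta> * (w i * (xpow (z i) \<alpha> * xpow (z i) \<gamma> * xpow (z i) \<beta>)))"
    by (simp add: loc_mat_def atomic_moments_def xpow_add sum_distrib_left)
  also have "\<dots> = (\<Sum>i\<in>I. \<Sum>\<beta>\<in>supp2 p. w i * (p \<beta> * xpow (z i) \<beta>) * xpow (z i) \<alpha> * xpow (z i) \<gamma>)"
    by (subst sum.swap) (simp add: mult_ac)
  also have "\<dots> = (\<Sum>i\<in>I. w i * eval2 p (z i) * xpow (z i) \<alpha> * xpow (z i) \<gamma>)"
    by (simp add: eval2_def xpow_def sum_distrib_left sum_distrib_right mult_ac)
  finally show ?thesis .
qed

lemma quadratic_form_sum_rank_one:
  fixes c :: "'i \<Rightarrow> real" and f :: "'i \<Rightarrow> 'a \<Rightarrow> real"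
  shows "(\<Sum>\<alpha>\<in>A. \<Sum>\<gamma>\<in>A. v \<alpha> * v \<gamma> * (\<Sum>i\<in>I. c i * f i \<alpha> * f i \<gamma>))
    = (\<Sum>i\<in>I. c i * (\<Sum>\<alpha>\<in>A. v \<alpha> * f i \<alpha>) ^ 2)"
  by (simp add: power2_eq_square sum_product sum_distrib_left mult_ac sum.swap[of _ I])

lemma psd_loc_mat_atomic_moments_iff:
  "psd_idx m (loc_mat p (atomic_moments w z I))
    \<longleftrightarrow> (\<forall>v. 0 \<le> (\<Sum>i\<in>I. w i * eval2 p (z i) * (\<Sum>\<alpha>\<in>{\<alpha>. tdeg \<alpha> \<le> m}. v \<alpha> * xpow (z i) \<alpha>) ^ 2))"
  unfolding psd_idx_def loc_mat_atomic_moments quadratic_form_sum_rank_one ..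

lemma psd_loc_mat_atomic_moments:
  assumes "\<And>i. i \<in> I \<Longrightarrow> 0 \<le> w i * eval2 p (z i)"
  shows "psd_idx m (loc_mat p (atomic_moments w z I))"
  unfolding psd_loc_mat_atomic_moments_iff using assms by (simp add: sum_nonneg)

lemma atomic_moments_in_Omega_Gcusp:
  assumes "2 \<le> k" "sum w I = 1" "\<And>i. i \<in> I \<Longrightarrow> 0 \<le> w i" "\<And>i. i \<in> I \<Longrightarrow> 0 \<le> fst (z i)"
    and "\<And>v. 0 \<le> (\<Sum>i\<in>I. w i * eval2 cusp (z i) * (\<Sum>\<alpha>\<in>{\<alpha>. tdeg \<alpha> \<le> k - 2}. v \<alpha> * xpow (z i) \<alpha>) ^ 2)"
  shows "(\<Sum>i\<in>I. w i * fst (z i), \<Sum>i\<in>I. w i * snd (z i)) \<in> Omega k Gcusp"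
proof -
  let ?y = "atomic_moments w z I"
  have "Ly ?y (const2 1) = ?y (0, 0)"
  proof -
    have "supp2 (const2 1) = {(0, 0)}"
      by (auto simp: supp2_def const2_def)
    then show ?thesis
      by (simp add: Ly_def const2_def)
  qed
  then have "Ly ?y (const2 1) = 1"
    using assms(2) by (simp add: atomic_moments_def xpow_def)
  moreover have "psd_idx k (moment_mat ?y)"
    unfolding moment_mat_eq_loc_mat using assms(3) by (intro psd_loc_mat_atomic_moments) (simp add: eval2_const2)
  moreover have "psd_idx (k - dhalf X1) (loc_mat X1 ?y)"
    using assms(3,4) by (intro psd_loc_mat_atomic_moments) (simp add: eval2_X1)
  moreover have "psd_idx (k - dhalf cusp) (loc_mat cusp ?y)"
    unfolding dhalf_cusp psd_loc_mat_atomic_moments_iff using assms(5) by blast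
  moreover have "?y (1, 0) = (\<Sum>i\<in>I. w i * fst (z i))" "?y (0, 1) = (\<Sum>i\<in>I. w i * snd (z i))"
    by (simp_all add: atomic_moments_def xpow_def)
  ultimately show ?thesis
    unfolding Omega_def Gcusp_def by (intro CollectI exI[of _ ?y]) simp
qed

lemma xpow_form_on_axis:
  obtains Q :: "real poly" where "degree Q \<le> m"
    "\<And>s. (\<Sum>\<alpha>\<in>{\<alpha>. tdeg \<alpha> \<le> m}. v \<alpha> * xpow (0, s) \<alpha>) = poly Q s"
proof
  show "degree (\<Sum>j\<le>m. monom (v (0, j)) j) \<le> m"
    by (intro degree_sum_le order.trans[OF degree_monom_le]) auto
  fix s :: real
  have "(\<Sum>\<alpha>\<in>{\<alpha>. tdeg \<alpha> \<le> m}. v \<alpha> * xpow (0, s) \<alpha>) = (\<Sum>\<alpha>\<in>(\<lambda>j. (0, j)) ` {..m}. v \<alpha> * xpow (0, s) \<alpha>)"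
    by (rule sum.mono_neutral_right[OF finite_tdeg_le]) (auto simp: tdeg_def xpow_def)
  also have "\<dots> = poly (\<Sum>j\<le>m. monom (v (0, j)) j) s"
    by (subst sum.reindex) (auto simp: inj_on_def xpow_def poly_sum poly_monom)
  finally show "(\<Sum>\<alpha>\<in>{\<alpha>. tdeg \<alpha> \<le> m}. v \<alpha> * xpow (0, s) \<alpha>) = poly (\<Sum>j\<le>m. monom (v (0, j)) j) s" .
qed

lemma lagrange_interpolation:
  fixes Q :: "real poly" and t :: "nat \<Rightarrow> real"
  assumes "inj_on t {..d}" "degree Q \<le> d"
  shows "poly Q x = (\<Sum>i\<le>d. poly Q (t i) * (\<Prod>r\<in>{..d} - {i}. (x - t r) / (t i - t r)))"
proof -
  define L where "L = (\<Sum>i\<le>d. smult (poly Q (t i))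
      (\<Prod>r\<in>{..d} - {i}. [:- t r / (t i - t r), 1 / (t i - t r):]))"
  have poly_L: "poly L x = (\<Sum>i\<le>d. poly Q (t i) * (\<Prod>r\<in>{..d} - {i}. (x - t r) / (t i - t r)))" for x
    by (simp add: L_def poly_sum poly_prod diff_divide_distrib)
  have "degree L \<le> d"
    unfolding L_def
  proof (intro degree_sum_le order.trans[OF degree_smult_le])
    fix i assume "i \<in> {..d}"
    have linear: "degree [:- t r / (t i - t r), 1 / (t i - t r):] \<le> 1" for r
      by (rule order.trans[OF degree_pCons_le]) simp
    have "degree (\<Prod>r\<in>{..d} - {i}. [:- t r / (t i - t r), 1 / (t i - t r):])
        \<le> sum (degree \<circ> (\<lambda>r. [:- t r / (t i - t r), 1 / (t i - t r):])) ({..d} - {i})"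
      by (rule degree_prod_sum_le) simp
    also have "\<dots> \<le> (\<Sum>r\<in>{..d} - {i}. 1)"
      by (rule sum_mono) (simp only: comp_def linear)
    also have "\<dots> \<le> d"
      using \<open>i \<in> {..d}\<close> by simp
    finally show "degree (\<Prod>r\<in>{..d} - {i}. [:- t r / (t i - t r), 1 / (t i - t r):]) \<le> d" .
  qed simp
  moreover have "poly Q (t k) = poly L (t k)" if "k \<le> d" for k
  proof -
    have "poly L (t k) = (\<Sum>i\<le>d. if i = k then poly Q (t k) else 0)"
      unfolding poly_L
    proof (intro sum.cong refl)
      fix i assume "i \<in> {..d}"
      then have "t i \<noteq> t r" if "r \<in> {..d} - {i}" for r
        using assms(1) that by (auto dest: inj_onD)
      moreover have "i \<noteq> k \<Longrightarrow> (\<Prod>r\<in>{..d} - {i}. (t k - t r) / (t i - t r)) = 0"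
        using that by (intro prod_zero) auto
      ultimately show "poly Q (t i) * (\<Prod>r\<in>{..d} - {i}. (t k - t r) / (t i - t r))
          = (if i = k then poly Q (t k) else 0)"
        by auto
    qed
    then show ?thesis
      using that by simp
  qed
  moreover have "card (t ` {..d}) = Suc d"
    using assms(1) by (simp add: card_image)
  ultimately have "Q = L"
    using assms(2) by (intro poly_eqI_degree[of "t ` {..d}"]) auto
  then have "poly Q x = poly L x"
    by simp
  then show ?thesis
    by (simp only: poly_L)
qed

lemma cusp_axis_weights:
  obtains \<tau> \<beta> :: real where "0 < \<tau>" "0 \<le> \<beta>" "\<beta> * (\<Sum>i\<le>d. real i + 1) < \<tau>"
    "\<And>Q. degree Q \<le> d \<Longrightarrow>
      \<tau> ^ 3 * poly Q \<tau> ^ 2 \<le> \<beta> * (\<Sum>i\<le>d. (real i + 1) ^ 3 * poly Q (- (real i + 1)) ^ 2)"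
proof -
  define t :: "nat \<Rightarrow> real" where "t i = - (real i + 1)" for i
  define l where "l i x = (\<Prod>r\<in>{..d} - {i}. (x - t r) / (t i - t r))" for i x
  define \<Lambda> where "\<Lambda> x = (\<Sum>i\<le>d. l i x ^ 2)" for x
  define S where "S = (\<Sum>i\<le>d. real i + 1)"
  have "((\<lambda>x. x ^ 2 * \<Lambda> x * S) \<longlongrightarrow> 0 ^ 2 * \<Lambda> 0 * S) (at_right 0)"
    unfolding \<Lambda>_def l_def by (intro tendsto_intros) (auto simp: t_def)
  then have "eventually (\<lambda>x. x ^ 2 * \<Lambda> x * S < 1) (at_right 0)"
    by (rule order_tendstoD(2)) simp
  then obtain b where "0 < b" and b: "\<And>x. 0 < x \<Longrightarrow> x < b \<Longrightarrow> x ^ 2 * \<Lambda> x * S < 1"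
    unfolding eventually_at_right_field by auto
  define \<tau> where "\<tau> = b / 2"
  define \<beta> where "\<beta> = \<tau> ^ 3 * \<Lambda> \<tau>"
  have "0 < \<tau>" "\<tau> ^ 2 * \<Lambda> \<tau> * S < 1"
    using \<open>0 < b\<close> b unfolding \<tau>_def by auto
  have "0 \<le> \<Lambda> \<tau>"
    unfolding \<Lambda>_def by (intro sum_nonneg) simp
  show ?thesis
  proof
    show "0 < \<tau>" "0 \<le> \<beta>"
      using \<open>0 < \<tau>\<close> \<open>0 \<le> \<Lambda> \<tau>\<close> by (simp_all add: \<beta>_def)
    have "\<tau> - \<beta> * S = \<tau> * (1 - \<tau> ^ 2 * \<Lambda> \<tau> * S)"
      by (simp add: \<beta>_def algebra_simps power2_eq_square power3_eq_cube)
    also have "\<dots> > 0"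
      using \<open>0 < \<tau>\<close> \<open>\<tau> ^ 2 * \<Lambda> \<tau> * S < 1\<close> by simp
    finally show "\<beta> * (\<Sum>i\<le>d. real i + 1) < \<tau>"
      unfolding S_def by simp
  next
    fix Q :: "real poly" assume "degree Q \<le> d"
    have "inj_on t {..d}"
      by (simp add: inj_on_def t_def)
    then have "poly Q \<tau> ^ 2 = (\<Sum>i\<le>d. l i \<tau> * poly Q (t i)) ^ 2"
      using lagrange_interpolation[OF _ \<open>degree Q \<le> d\<close>] by (simp add: l_def mult.commute)
    also have "\<dots> \<le> \<Lambda> \<tau> * (\<Sum>i\<le>d. poly Q (t i) ^ 2)"
      unfolding \<Lambda>_def by (rule Cauchy_Schwarz_ineq_sum)
    also have "\<dots> \<le> \<Lambda> \<tau> * (\<Sum>i\<le>d. (real i + 1) ^ 3 * poly Q (t i) ^ 2)"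
      using \<open>0 \<le> \<Lambda> \<tau>\<close> by (intro mult_left_mono sum_mono) (simp_all add: mult_le_cancel_right1)
    finally have "\<tau> ^ 3 * poly Q \<tau> ^ 2 \<le> \<tau> ^ 3 * (\<Lambda> \<tau> * (\<Sum>i\<le>d. (real i + 1) ^ 3 * poly Q (t i) ^ 2))"
      using \<open>0 < \<tau>\<close> by (intro mult_left_mono) simp_all
    then show "\<tau> ^ 3 * poly Q \<tau> ^ 2 \<le> \<beta> * (\<Sum>i\<le>d. (real i + 1) ^ 3 * poly Q (- (real i + 1)) ^ 2)"
      by (simp add: \<beta>_def t_def mult.assoc)
  qed
qed

lemma half_plane_subset_Omega_Gcusp:
  assumes "2 \<le> k"
  shows "{x. 0 \<le> fst x} \<subseteq> Omega k Gcusp"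
proof
  fix x :: "real \<times> real"
  assume "x \<in> {x. 0 \<le> fst x}"
  then have "0 \<le> fst x"
    by simp
  define d where "d = k - 2"
  define S where "S = (\<Sum>i\<le>d. real i + 1)"
  obtain \<tau> \<beta> where "0 < \<tau>" "0 \<le> \<beta>" "\<beta> * S < \<tau>" and axis:
    "\<And>Q. degree Q \<le> d \<Longrightarrow>
      \<tau> ^ 3 * poly Q \<tau> ^ 2 \<le> \<beta> * (\<Sum>i\<le>d. (real i + 1) ^ 3 * poly Q (- (real i + 1)) ^ 2)"
    using cusp_axis_weights unfolding S_def by blast
  define \<theta> where "\<theta> = 1 / (2 * (1 + (real d + 1) * \<beta>))"
  define \<mu> where "\<mu> = (\<bar>snd x\<bar> + 1) / (\<theta> * (\<tau> - \<beta> * S))"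
  define w where "w i = (if i \<le> d then \<theta> * \<beta> else if i = Suc d then \<theta> else 1 / 2)" for i
  define z where "z i = (if i \<le> d then (0, - (\<mu> * (real i + 1))) else if i = Suc d then (0, \<mu> * \<tau>)
      else (2 * fst x, 2 * snd x - 2 * (\<bar>snd x\<bar> + 1)))" for i
  have "0 < \<theta>"
    using \<open>0 \<le> \<beta>\<close> by (simp add: \<theta>_def add_pos_nonneg)
  have "0 < \<mu>" and \<mu>: "\<theta> * \<mu> * (\<tau> - \<beta> * S) = \<bar>snd x\<bar> + 1"
    using \<open>0 < \<theta>\<close> \<open>\<beta> * S < \<tau>\<close> by (simp_all add: \<mu>_def add_pos_nonneg)
  have "(\<Sum>i\<le>Suc (Suc d). w i * fst (z i), \<Sum>i\<le>Suc (Suc d). w i * snd (z i)) \<in> Omega k Gcusp"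
  proof (rule atomic_moments_in_Omega_Gcusp)
    show "2 \<le> k"
      by (fact assms)
    show "sum w {..Suc (Suc d)} = 1"
      using \<open>0 < \<theta>\<close> \<open>0 \<le> \<beta>\<close> by (simp add: w_def \<theta>_def field_simps)
    show "0 \<le> w i" "0 \<le> fst (z i)" for i
      using \<open>0 < \<theta>\<close> \<open>0 \<le> \<beta>\<close> \<open>0 \<le> fst x\<close> by (simp_all add: w_def z_def)
    fix v :: "nat \<times> nat \<Rightarrow> real"
    obtain Q where "degree Q \<le> d" and Q: "\<And>s. (\<Sum>\<alpha>\<in>{\<alpha>. tdeg \<alpha> \<le> d}. v \<alpha> * xpow (0, s) \<alpha>) = poly Q s"
      using xpow_form_on_axis by blast
    define Qs where "Qs = pcompose Q [:0, \<mu>:]"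
    have "degree Qs \<le> d"
      using \<open>degree Q \<le> d\<close> by (simp add: Qs_def degree_pcompose)
    then have "\<theta> * \<mu> ^ 3 * (\<tau> ^ 3 * poly Qs \<tau> ^ 2)
        \<le> \<theta> * \<mu> ^ 3 * (\<beta> * (\<Sum>i\<le>d. (real i + 1) ^ 3 * poly Qs (- (real i + 1)) ^ 2))"
      using \<open>0 < \<mu>\<close> \<open>0 < \<theta>\<close> by (intro mult_left_mono axis) simp_all
    moreover have "(\<Sum>i\<le>d. w i * eval2 cusp (z i) * (\<Sum>\<alpha>\<in>{\<alpha>. tdeg \<alpha> \<le> d}. v \<alpha> * xpow (z i) \<alpha>) ^ 2)
        = \<theta> * \<mu> ^ 3 * (\<beta> * (\<Sum>i\<le>d. (real i + 1) ^ 3 * poly Qs (- (real i + 1)) ^ 2))"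
      unfolding sum_distrib_left
    proof (intro sum.cong refl)
      fix i assume "i \<in> {..d}"
      then have "z i = (0, - (\<mu> * (real i + 1)))" "w i = \<theta> * \<beta>"
        by (simp_all add: z_def w_def)
      moreover have "(- (\<mu> * (real i + 1))) ^ 3 = - (\<mu> ^ 3 * (real i + 1) ^ 3)"
        by (simp add: power_mult_distrib)
      moreover have "poly Qs (- (real i + 1)) = poly Q (- (\<mu> * (real i + 1)))"
        by (simp add: Qs_def poly_pcompose algebra_simps)
      ultimately show "w i * eval2 cusp (z i) * (\<Sum>\<alpha>\<in>{\<alpha>. tdeg \<alpha> \<le> d}. v \<alpha> * xpow (z i) \<alpha>) ^ 2
          = \<theta> * \<mu> ^ 3 * (\<beta> * ((real i + 1) ^ 3 * poly Qs (- (real i + 1)) ^ 2))"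
        by (simp add: eval2_cusp Q)
    qed
    moreover have "w (Suc d) * eval2 cusp (z (Suc d)) * (\<Sum>\<alpha>\<in>{\<alpha>. tdeg \<alpha> \<le> d}. v \<alpha> * xpow (z (Suc d)) \<alpha>) ^ 2
        = - (\<theta> * \<mu> ^ 3 * (\<tau> ^ 3 * poly Qs \<tau> ^ 2))"
      by (simp add: w_def z_def eval2_cusp Q Qs_def poly_pcompose power_mult_distrib mult.commute[of \<tau>])
    moreover have "0 \<le> eval2 cusp (z (Suc (Suc d)))"
    proof -
      define e where "e = 2 * snd x - 2 * (\<bar>snd x\<bar> + 1)"
      have "e \<le> 0"
        by (simp add: e_def)
      then have "e ^ 3 \<le> 0"
        by (simp add: power_le_zero_eq)
      moreover have "eval2 cusp (z (Suc (Suc d))) = (2 * fst x) ^ 2 - e ^ 3"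
        by (simp add: z_def eval2_cusp e_def)
      ultimately show ?thesis
        using zero_le_power2[of "2 * fst x"] by linarith
    qed
    then have "0 \<le> w (Suc (Suc d)) * eval2 cusp (z (Suc (Suc d)))
        * (\<Sum>\<alpha>\<in>{\<alpha>. tdeg \<alpha> \<le> d}. v \<alpha> * xpow (z (Suc (Suc d))) \<alpha>) ^ 2"
      by (simp add: w_def)
    ultimately show "0 \<le> (\<Sum>i\<le>Suc (Suc d). w i * eval2 cusp (z i) *
        (\<Sum>\<alpha>\<in>{\<alpha>. tdeg \<alpha> \<le> k - 2}. v \<alpha> * xpow (z i) \<alpha>) ^ 2)"
      unfolding d_def[symmetric] by simp
  qed
  moreover have "(\<Sum>i\<le>Suc (Suc d). w i * fst (z i)) = fst x"
    by (simp add: w_def z_def)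
  moreover have "(\<Sum>i\<le>Suc (Suc d). w i * snd (z i)) = snd x"
  proof -
    have "(\<Sum>i\<le>d. w i * snd (z i)) = (\<Sum>i\<le>d. - (\<theta> * \<beta> * \<mu> * (real i + 1)))"
      by (intro sum.cong) (simp_all add: w_def z_def)
    also have "\<dots> = - (\<theta> * \<mu> * (\<beta> * S))"
      by (simp add: S_def sum_negf sum_distrib_left mult_ac)
    finally show ?thesis
      using \<mu> by (simp add: w_def z_def algebra_simps)
  qed
  ultimately show "x \<in> Omega k Gcusp"
    by simp
qed

theorem mainTheorem16:
  shows "(\<forall>k::nat. k \<ge> 1 \<longrightarrow> TH k Gcusp = {x. fst x \<ge> 0})
       \<and> (\<forall>k::nat. k \<ge> 2 \<longrightarrow> closure (Omega k Gcusp) = {x. fst x \<ge> 0})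
       \<and> convex hull Scusp = Scusp
       \<and> Scusp \<noteq> {x. fst x \<ge> 0}"
proof (intro conjI allI impI)
  show "TH k Gcusp = {x. 0 \<le> fst x}" if "1 \<le> k" for k
    using that by (rule TH_Gcusp)
  show "closure (Omega k Gcusp) = {x. 0 \<le> fst x}" if "2 \<le> k" for k
  proof -
    have "Omega k Gcusp = {x. 0 \<le> fst x}"
      using that by (intro subset_antisym Omega_Gcusp_subset half_plane_subset_Omega_Gcusp) simp_all
    moreover have "closed {x :: real \<times> real. 0 \<le> fst x}"
      by (intro closed_Collect_le continuous_intros)
    ultimately show ?thesis
      by simp
  qed
  show "convex hull Scusp = Scusp"
    by (rule convex_hull_eq[THEN iffD2, OF convex_Scusp])
  have "(0, 1) \<notin> Scusp" "(0, 1) \<in> {x :: real \<times> real. 0 \<le> fst x}"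
    by (simp_all add: Scusp_def)
  then show "Scusp \<noteq> {x. 0 \<le> fst x}"
    by blast
qed

end
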